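(* The square root of $2$ is irrational in the Zykov field: there is no element $x$ of the Zykov field with $x\cdot x=K_2$ (where $K_2=K_1+K_1$ plays the role of $2$).
   Context: Graphs are finite simple graphs up to isomorphism. The Zykov join of $G=(V,E)$, $H=(W,F)$ is $G+H=(V\cup W,\,E\cup F\cup\{\{v,w\}:v\in V,w\in W\})$, and the Zykov product $G\cdot H$ has vertex set $V\times W$ with $(a,b)\sim(c,d)$ iff $\{a,c\}\in E$ or $\{b,d\}\in F$. The Zykov ring is the Grothendieck group of (graphs, $+$) with $\cdot$ extended bilinearly; it is an integral domain, and the Zykov field is its field of fractions. *)

theory Defs
  imports Main
begin

text \<open>Finite simple graphs, concretely: a graph is a pair (n, E) with vertex set
  {0..<n} and a symmetric irreflexive edge relation E supported on {0..<n}.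
  Graphs are compared up to isomorphism.\<close>

type_synonym graph = "nat \<times> (nat \<Rightarrow> nat \<Rightarrow> bool)"

definition graph_wf :: "graph \<Rightarrow> bool" where
  "graph_wf G \<longleftrightarrow> (\<forall>u v. snd G u v \<longrightarrow> u < fst G \<and> v < fst G \<and> u \<noteq> v \<and> snd G v u)"

definition graph_iso :: "graph \<Rightarrow> graph \<Rightarrow> bool" where
  "graph_iso G H \<longleftrightarrow> fst G = fst H \<and>
     (\<exists>f. bij_betw f {..<fst G} {..<fst H} \<and>
          (\<forall>u<fst G. \<forall>v<fst G. snd G u v \<longleftrightarrow> snd H (f u) (f v)))"

definition graph_empty :: graph where
  "graph_empty = (0, \<lambda>_ _. False)"

definition graph_K1 :: graph where
  "graph_K1 = (1, \<lambda>_ _. False)"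

definition zjoin :: "graph \<Rightarrow> graph \<Rightarrow> graph" where
  "zjoin G H = (let n = fst G; m = fst H; E = snd G; F = snd H in
     (n + m, \<lambda>u v. (u < n \<and> v < n \<and> E u v)
                 \<or> (n \<le> u \<and> n \<le> v \<and> u < n + m \<and> v < n + m \<and> F (u - n) (v - n))
                 \<or> (u < n \<and> n \<le> v \<and> v < n + m)
                 \<or> (v < n \<and> n \<le> u \<and> u < n + m)))"

text \<open>Zykov product: vertex (a,b) is encoded as a*m+b; (a,b)~(c,d) iff a~c in G or b~d in H.\<close>
definition zprod :: "graph \<Rightarrow> graph \<Rightarrow> graph" where
  "zprod G H = (let n = fst G; m = fst H; E = snd G; F = snd H in
     (n * m, \<lambda>u v. u < n * m \<and> v < n * m \<and> (E (u div m) (v div m) \<or> F (u mod m) (v mod m))))"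

text \<open>Zykov ring: Grothendieck group of (graphs, join). An element is a formal
  difference P - N of graphs; P - N = P' - N' iff P+N'+K and P'+N+K are
  isomorphic for some graph K.\<close>
type_synonym zring = "graph \<times> graph"

definition zr_wf :: "zring \<Rightarrow> bool" where
  "zr_wf x \<longleftrightarrow> graph_wf (fst x) \<and> graph_wf (snd x)"

definition zr_eq :: "zring \<Rightarrow> zring \<Rightarrow> bool" where
  "zr_eq x y \<longleftrightarrow> (\<exists>K. graph_wf K \<and>
     graph_iso (zjoin (zjoin (fst x) (snd y)) K) (zjoin (zjoin (fst y) (snd x)) K))"

definition zr_zero :: zring where
  "zr_zero = (graph_empty, graph_empty)"

definition zr_one :: zring where
  "zr_one = (graph_K1, graph_empty)"

definition zr_K2 :: zring where
  "zr_K2 = (zjoin graph_K1 graph_K1, graph_empty)"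

text \<open>(P - N)(Q - M) = (PQ + NM) - (PM + NQ)\<close>
definition zr_mul :: "zring \<Rightarrow> zring \<Rightarrow> zring" where
  "zr_mul x y = (zjoin (zprod (fst x) (fst y)) (zprod (snd x) (snd y)),
                 zjoin (zprod (fst x) (snd y)) (zprod (snd x) (fst y)))"

text \<open>Zykov field: field of fractions a/b of the Zykov ring, b \<noteq> 0.\<close>
type_synonym zfield = "zring \<times> zring"

definition zf_wf :: "zfield \<Rightarrow> bool" where
  "zf_wf x \<longleftrightarrow> zr_wf (fst x) \<and> zr_wf (snd x) \<and> \<not> zr_eq (snd x) zr_zero"

definition zf_eq :: "zfield \<Rightarrow> zfield \<Rightarrow> bool" where
  "zf_eq x y \<longleftrightarrow> zr_eq (zr_mul (fst x) (snd y)) (zr_mul (fst y) (snd x))"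

definition zf_mul :: "zfield \<Rightarrow> zfield \<Rightarrow> zfield" where
  "zf_mul x y = (zr_mul (fst x) (fst y), zr_mul (snd x) (snd y))"

definition zf_K2 :: zfield where
  "zf_K2 = (zr_K2, zr_one)"

end

theory Submission
  imports Defs "HOL-Library.FuncSet"
begin

text \<open>
  A finite pattern on a vertex set V consists of pairs T that must be sent to non-edges, pairs R
  that must be identified and pairs D that must be kept apart; we count the maps from V into a
  graph respecting it. If the pattern is connected (via T and R) and D is empty, the count is
  additive under the join, since all cross pairs of a join are edges and so a connected pattern
  lands on one side, and multiplicative under the Zykov product, whose non-edges are pairs of
  non-edges. Hence every connected pattern yields a ring homomorphism from the Zykov ring to the
  integers. If x = a/b squared to 2, its images would satisfy p^2 = 2 q^2 with q the image of b,
  so q = 0: the two graphs P, N with b = P - N have the same counts for all connected patterns.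
  Counts factor over the linked components of a pattern, and inclusion-exclusion over R handles
  D, so P and N have equal counts for all patterns. Counting injective maps along the non-edges
  of P gives an edge-reflecting injection P \<rightarrow> N and vice versa, hence P and N are isomorphic
  and b = 0, which is not allowed for a denominator.
\<close>

lemma int_square_eq_twice_square_imp_zero:
  fixes p q :: int
  assumes "p\<^sup>2 = 2 * q\<^sup>2"
  shows "q = 0"
  using assms
proof (induction "nat \<bar>q\<bar>" arbitrary: p q rule: less_induct)
  case less
  then have "even p" by (metis dvd_triv_left even_power)
  then obtain r where r: "p = 2 * r" ..
  with less.prems have "q\<^sup>2 = 2 * r\<^sup>2" by (simp add: power2_eq_square)
  then have "even q" by (metis dvd_triv_left even_power)
  then obtain s where s: "q = 2 * s" ..
  with \<open>q\<^sup>2 = 2 * r\<^sup>2\<close> have "r\<^sup>2 = 2 * s\<^sup>2" by (simp add: power2_eq_square)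
  show "q = 0"
  proof (rule ccontr)
    assume "q \<noteq> 0"
    then have "nat \<bar>s\<bar> < nat \<bar>q\<bar>" using s by auto
    with less.hyps \<open>r\<^sup>2 = 2 * s\<^sup>2\<close> have "s = 0" by blast
    with s \<open>q \<noteq> 0\<close> show False by simp
  qed
qed

definition pattern_maps ::
    "nat set \<Rightarrow> (nat \<Rightarrow> nat \<Rightarrow> bool) \<Rightarrow> (nat \<times> nat) set \<Rightarrow> (nat \<times> nat) set \<Rightarrow> graph \<Rightarrow> (nat \<Rightarrow> nat) set"
  where "pattern_maps V T R D X = {f \<in> V \<rightarrow>\<^sub>E {..<fst X}. \<forall>u\<in>V. \<forall>v\<in>V.
      (T u v \<longrightarrow> \<not> snd X (f u) (f v)) \<and> ((u, v) \<in> R \<longrightarrow> f u = f v) \<and> ((u, v) \<in> D \<longrightarrow> f u \<noteq> f v)}"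

definition pattern_count ::
    "nat set \<Rightarrow> (nat \<Rightarrow> nat \<Rightarrow> bool) \<Rightarrow> (nat \<times> nat) set \<Rightarrow> (nat \<times> nat) set \<Rightarrow> graph \<Rightarrow> nat"
  where "pattern_count V T R D X = card (pattern_maps V T R D X)"

lemma pattern_maps_iff:
  "f \<in> pattern_maps V T R D X \<longleftrightarrow> f \<in> extensional V \<and> (\<forall>u\<in>V. f u < fst X) \<and>
     (\<forall>u\<in>V. \<forall>v\<in>V. (T u v \<longrightarrow> \<not> snd X (f u) (f v)) \<and> ((u, v) \<in> R \<longrightarrow> f u = f v) \<and>
                     ((u, v) \<in> D \<longrightarrow> f u \<noteq> f v))"
  by (auto simp: pattern_maps_def PiE_iff)

lemma finite_pattern_maps: "finite V \<Longrightarrow> finite (pattern_maps V T R D X)"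
  unfolding pattern_maps_def by (rule finite_subset[of _ "V \<rightarrow>\<^sub>E {..<fst X}"]) (auto intro: finite_PiE)

lemma pattern_maps_transfer:
  assumes f: "f \<in> pattern_maps V T R D X" and img: "f ` V \<subseteq> A"
    and into: "\<phi> ` A \<subseteq> {..<fst Y}" and inj: "inj_on \<phi> A"
    and reflects: "\<And>x y. x \<in> A \<Longrightarrow> y \<in> A \<Longrightarrow> snd Y (\<phi> x) (\<phi> y) \<Longrightarrow> snd X x y"
  shows "restrict (\<phi> \<circ> f) V \<in> pattern_maps V T R D Y"
proof -
  have A: "f u \<in> A" if "u \<in> V" for u using img that by auto
  have "\<phi> (f u) = \<phi> (f v) \<longleftrightarrow> f u = f v" if "u \<in> V" "v \<in> V" for u v
    using A[OF that(1)] A[OF that(2)] inj by (auto dest: inj_onD)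
  moreover have "snd Y (\<phi> (f u)) (\<phi> (f v)) \<Longrightarrow> snd X (f u) (f v)" if "u \<in> V" "v \<in> V" for u v
    using A[OF that(1)] A[OF that(2)] reflects by blast
  moreover have "\<phi> (f u) < fst Y" if "u \<in> V" for u using A[OF that] into by auto
  ultimately show ?thesis using f unfolding pattern_maps_iff by (auto; meson)
qed

lemma pattern_maps_subgraph:
  assumes f: "f \<in> pattern_maps V T R D X" and "f ` V \<subseteq> A" and "A \<subseteq> {..<fst Y}"
    and "\<And>x y. x \<in> A \<Longrightarrow> y \<in> A \<Longrightarrow> snd Y x y \<Longrightarrow> snd X x y"
  shows "f \<in> pattern_maps V T R D Y"
proof -
  have "restrict (id \<circ> f) V \<in> pattern_maps V T R D Y"
    using pattern_maps_transfer[OF f assms(2), where \<phi> = id and Y = Y] assms(3,4) by auto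
  with f show ?thesis by (simp add: pattern_maps_iff extensional_restrict)
qed

lemma inj_on_restrict_comp_pattern_maps:
  assumes "inj_on \<phi> {..<fst X}"
  shows "inj_on (\<lambda>f. restrict (\<phi> \<circ> f) V) (pattern_maps V T R D X)"
proof (rule inj_onI)
  fix f g assume f: "f \<in> pattern_maps V T R D X" and g: "g \<in> pattern_maps V T R D X"
    and eq: "restrict (\<phi> \<circ> f) V = restrict (\<phi> \<circ> g) V"
  show "f = g"
  proof (rule extensionalityI[of _ V])
    show "f \<in> extensional V" "g \<in> extensional V" using f g by (simp_all add: pattern_maps_iff)
    fix u assume u: "u \<in> V"
    then have "\<phi> (f u) = \<phi> (g u)" using fun_cong[OF eq, of u] by simp
    moreover have "f u < fst X" "g u < fst X" using f g u by (simp_all add: pattern_maps_iff)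
    ultimately show "f u = g u" using inj_onD[OF assms] by simp
  qed
qed

definition nonedge_embedding :: "(nat \<Rightarrow> nat) \<Rightarrow> graph \<Rightarrow> graph \<Rightarrow> bool"
  where "nonedge_embedding \<phi> X Y \<longleftrightarrow> inj_on \<phi> {..<fst X} \<and> \<phi> ` {..<fst X} \<subseteq> {..<fst Y} \<and>
     (\<forall>x<fst X. \<forall>y<fst X. snd Y (\<phi> x) (\<phi> y) \<longrightarrow> snd X x y)"

lemma pattern_count_le_if_nonedge_embedding:
  assumes "finite V" and "nonedge_embedding \<phi> X Y"
  shows "pattern_count V T R D X \<le> pattern_count V T R D Y"
proof -
  have inj: "inj_on \<phi> {..<fst X}" using assms(2) by (simp add: nonedge_embedding_def)
  have "(\<lambda>f. restrict (\<phi> \<circ> f) V) ` pattern_maps V T R D X \<subseteq> pattern_maps V T R D Y"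
    using assms(2) unfolding nonedge_embedding_def
    by (auto intro!: pattern_maps_transfer[where A = "{..<fst X}"] simp: pattern_maps_iff)
  then show ?thesis unfolding pattern_count_def
    by (rule card_inj_on_le[OF inj_on_restrict_comp_pattern_maps[OF inj] _ finite_pattern_maps[OF assms(1)]])
qed

lemma graph_iso_sym: "graph_iso X Y \<Longrightarrow> graph_iso Y X"
proof -
  assume "graph_iso X Y"
  then obtain f where n: "fst X = fst Y" and b: "bij_betw f {..<fst X} {..<fst Y}"
    and e: "\<forall>u<fst X. \<forall>v<fst X. snd X u v \<longleftrightarrow> snd Y (f u) (f v)"
    unfolding graph_iso_def by blast
  let ?g = "inv_into {..<fst X} f"
  have b': "bij_betw ?g {..<fst Y} {..<fst X}" using b by (rule bij_betw_inv_into)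
  have "snd Y u v \<longleftrightarrow> snd X (?g u) (?g v)" if "u < fst Y" "v < fst Y" for u v
  proof -
    have "?g u < fst X" "?g v < fst X" using b' that by (auto dest: bij_betwE)
    moreover have "f (?g u) = u" "f (?g v) = v" using b that by (auto simp: bij_betw_inv_into_right)
    ultimately show ?thesis using e by metis
  qed
  with n b' show ?thesis unfolding graph_iso_def by auto
qed

lemma nonedge_embedding_if_graph_iso: "graph_iso X Y \<Longrightarrow> \<exists>\<phi>. nonedge_embedding \<phi> X Y"
  unfolding graph_iso_def nonedge_embedding_def bij_betw_def by (metis order_refl)

lemma pattern_count_iso:
  "graph_iso X Y \<Longrightarrow> finite V \<Longrightarrow> pattern_count V T R D X = pattern_count V T R D Y"
  by (meson antisym graph_iso_sym nonedge_embedding_if_graph_iso pattern_count_le_if_nonedge_embedding)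

lemma fst_zjoin [simp]: "fst (zjoin G H) = fst G + fst H"
  by (simp add: zjoin_def Let_def)

lemma zjoin_edge_low: "x < fst G \<Longrightarrow> y < fst G \<Longrightarrow> snd (zjoin G H) x y = snd G x y"
  by (simp add: zjoin_def Let_def)

lemma zjoin_edge_high:
  "x < fst H \<Longrightarrow> y < fst H \<Longrightarrow> snd (zjoin G H) (x + fst G) (y + fst G) = snd H x y"
  by (simp add: zjoin_def Let_def)

lemma zjoin_nonedge_same_side:
  "x < fst G + fst H \<Longrightarrow> y < fst G + fst H \<Longrightarrow> \<not> snd (zjoin G H) x y \<Longrightarrow> x < fst G \<longleftrightarrow> y < fst G"
  by (auto simp: zjoin_def Let_def)

definition pattern_link :: "nat set \<Rightarrow> (nat \<Rightarrow> nat \<Rightarrow> bool) \<Rightarrow> (nat \<times> nat) set \<Rightarrow> (nat \<times> nat) set"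
  where "pattern_link V T R = {(u, v). u \<in> V \<and> v \<in> V \<and> (T u v \<or> T v u \<or> (u, v) \<in> R \<or> (v, u) \<in> R)}"

definition pattern_connected :: "nat set \<Rightarrow> (nat \<Rightarrow> nat \<Rightarrow> bool) \<Rightarrow> (nat \<times> nat) set \<Rightarrow> bool"
  where "pattern_connected V T R \<longleftrightarrow> (\<exists>v\<in>V. \<forall>u\<in>V. (v, u) \<in> (pattern_link V T R)\<^sup>*)"

lemma pattern_maps_zjoin_same_side:
  assumes f: "f \<in> pattern_maps V T R D (zjoin G H)" and "(v, u) \<in> (pattern_link V T R)\<^sup>*"
  shows "f u < fst G \<longleftrightarrow> f v < fst G"
  using \<open>(v, u) \<in> _\<close>
proof (induction rule: rtrancl_induct)
  case (step y z)
  then have yz: "y \<in> V" "z \<in> V" and link: "T y z \<or> T z y \<or> (y, z) \<in> R \<or> (z, y) \<in> R"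
    by (auto simp: pattern_link_def)
  have "f y < fst G + fst H" "f z < fst G + fst H" using f yz by (simp_all add: pattern_maps_iff)
  moreover have "\<not> snd (zjoin G H) (f y) (f z) \<or> \<not> snd (zjoin G H) (f z) (f y) \<or> f y = f z"
    using f yz link unfolding pattern_maps_iff by fastforce
  ultimately have "f z < fst G \<longleftrightarrow> f y < fst G" using zjoin_nonedge_same_side by metis
  with step.IH show ?case by simp
qed simp

lemma pattern_count_zjoin:
  assumes fin: "finite V" and conn: "pattern_connected V T R"
  shows "pattern_count V T R D (zjoin G H) = pattern_count V T R D G + pattern_count V T R D H"
proof -
  define n where "n = fst G"
  define shift where "shift h = restrict ((\<lambda>x. x + n) \<circ> h) V" for h :: "nat \<Rightarrow> nat"
  obtain v where v: "v \<in> V" and reach: "\<And>u. u \<in> V \<Longrightarrow> (v, u) \<in> (pattern_link V T R)\<^sup>*"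
    using conn unfolding pattern_connected_def by blast
  have low: "pattern_maps V T R D G \<subseteq> pattern_maps V T R D (zjoin G H)"
  proof
    fix f assume f: "f \<in> pattern_maps V T R D G"
    show "f \<in> pattern_maps V T R D (zjoin G H)"
      by (rule pattern_maps_subgraph[OF f, where A = "{..<fst G}"])
        (use f in \<open>auto simp: pattern_maps_iff zjoin_edge_low\<close>)
  qed
  have high: "shift ` pattern_maps V T R D H \<subseteq> pattern_maps V T R D (zjoin G H)"
    unfolding shift_def n_def
    by (auto intro!: pattern_maps_transfer[where A = "{..<fst H}"] simp: pattern_maps_iff zjoin_edge_high)
  have "pattern_maps V T R D (zjoin G H) \<subseteq> pattern_maps V T R D G \<union> shift ` pattern_maps V T R D H"
  proof
    fix f assume f: "f \<in> pattern_maps V T R D (zjoin G H)"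
    then have side: "f u < n \<longleftrightarrow> f v < n" if "u \<in> V" for u
      using pattern_maps_zjoin_same_side reach that unfolding n_def by blast
    have bound: "f u < n + fst H" if "u \<in> V" for u using f that by (simp add: pattern_maps_iff n_def)
    show "f \<in> pattern_maps V T R D G \<union> shift ` pattern_maps V T R D H"
    proof (cases "f v < n")
      case True
      with side have "f ` V \<subseteq> {..<n}" by auto
      with f have "f \<in> pattern_maps V T R D G"
        by (rule pattern_maps_subgraph) (auto simp: n_def zjoin_edge_low)
      then show ?thesis ..
    next
      case False
      with side bound have img: "f ` V \<subseteq> {n..<n + fst H}" by force
      have "restrict ((\<lambda>x. x - n) \<circ> f) V \<in> pattern_maps V T R D H"
      proof (rule pattern_maps_transfer[OF f img])
        fix x y assume "x \<in> {n..<n + fst H}" "y \<in> {n..<n + fst H}"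
        then show "snd H (x - n) (y - n) \<Longrightarrow> snd (zjoin G H) x y"
          using zjoin_edge_high[of "x - n" H "y - n" G] by (auto simp: n_def)
      qed (auto simp: inj_on_def)
      moreover have "shift (restrict ((\<lambda>x. x - n) \<circ> f) V) = f"
        using f img by (auto simp: shift_def pattern_maps_iff intro!: extensionalityI[of _ V])
      ultimately show ?thesis by (metis UnI2 image_eqI)
    qed
  qed
  with low high have union: "pattern_maps V T R D (zjoin G H) = pattern_maps V T R D G \<union> shift ` pattern_maps V T R D H"
    by blast
  have "pattern_maps V T R D G \<inter> shift ` pattern_maps V T R D H = {}"
    using v by (auto simp: pattern_maps_iff shift_def n_def)
  moreover have "card (shift ` pattern_maps V T R D H) = pattern_count V T R D H"
    unfolding shift_def pattern_count_def by (rule card_image) (simp add: inj_on_restrict_comp_pattern_maps)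
  ultimately show ?thesis
    unfolding union pattern_count_def using fin by (simp add: card_Un_disjoint finite_pattern_maps)
qed

lemma fst_zprod [simp]: "fst (zprod G H) = fst G * fst H"
  by (simp add: zprod_def Let_def)

lemma zprod_edge:
  "x < fst G * fst H \<Longrightarrow> y < fst G * fst H \<Longrightarrow> snd (zprod G H) x y \<longleftrightarrow>
     snd G (x div fst H) (y div fst H) \<or> snd H (x mod fst H) (y mod fst H)"
  by (simp add: zprod_def Let_def)

lemma mult_add_less_mult:
  fixes a b n m :: nat
  assumes "a < n" and "b < m"
  shows "a * m + b < n * m"
proof -
  have "a * m + b < (a + 1) * m" using assms(2) by simp
  also have "\<dots> \<le> n * m" using assms(1) by (intro mult_right_mono) auto
  finally show ?thesis .
qed

lemma pattern_count_zprod: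
  assumes "finite V"
  shows "pattern_count V T R {} (zprod G H) = pattern_count V T R {} G * pattern_count V T R {} H"
proof -
  define m where "m = fst H"
  define pair where "pair gh = restrict (\<lambda>u. fst gh u * m + snd gh u) V" for gh :: "(nat \<Rightarrow> nat) \<times> (nat \<Rightarrow> nat)"
  define split where "split f = (restrict (\<lambda>u. f u div m) V, restrict (\<lambda>u. f u mod m) V)" for f :: "nat \<Rightarrow> nat"
  have digits: "(a * m + b) div m = a" "(a * m + b) mod m = b" if "b < m" for a b
    using that by simp_all
  have low_digit: "x mod m < m" if "x < k * m" for x k
    using that by (cases m) auto
  have "bij_betw pair (pattern_maps V T R {} G \<times> pattern_maps V T R {} H) (pattern_maps V T R {} (zprod G H))"
  proof (rule bij_betw_byWitness[where f' = split])
    show "\<forall>gh \<in> pattern_maps V T R {} G \<times> pattern_maps V T R {} H. split (pair gh) = gh"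
      by (auto simp: pair_def split_def m_def pattern_maps_iff digits[unfolded m_def] intro!: extensionalityI[of _ V])
    show "\<forall>f \<in> pattern_maps V T R {} (zprod G H). pair (split f) = f"
      by (auto simp: pair_def split_def pattern_maps_iff intro!: extensionalityI[of _ V])
    show "pair ` (pattern_maps V T R {} G \<times> pattern_maps V T R {} H) \<subseteq> pattern_maps V T R {} (zprod G H)"
      by (auto simp: pair_def m_def pattern_maps_iff zprod_edge mult_add_less_mult digits[unfolded m_def])
    show "split ` pattern_maps V T R {} (zprod G H) \<subseteq> pattern_maps V T R {} G \<times> pattern_maps V T R {} H"
    proof
      fix gh assume "gh \<in> split ` pattern_maps V T R {} (zprod G H)"
      then obtain f where f: "f \<in> pattern_maps V T R {} (zprod G H)" and gh: "gh = split f" by blast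
      then have "f u div m < fst G" "f u mod m < m" if "u \<in> V" for u
        using that less_mult_imp_div_less low_digit by (auto simp: pattern_maps_iff m_def)
      with f show "gh \<in> pattern_maps V T R {} G \<times> pattern_maps V T R {} H"
        by (auto simp: gh split_def m_def pattern_maps_iff zprod_edge)
    qed
  qed
  then show ?thesis
    unfolding pattern_count_def by (simp add: bij_betw_same_card[symmetric] card_cartesian_product)
qed

lemma pattern_count_graph_empty: "V \<noteq> {} \<Longrightarrow> pattern_count V T R D graph_empty = 0"
  by (auto simp: pattern_count_def pattern_maps_def graph_empty_def PiE_eq_empty_iff)

lemma pattern_count_graph_K1: "V \<noteq> {} \<Longrightarrow> pattern_count V T R {} graph_K1 = 1"
proof -
  have "pattern_maps V T R {} graph_K1 = {restrict (\<lambda>_. 0) V}"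
    by (auto simp: pattern_maps_iff graph_K1_def intro!: extensionalityI[of _ V])
  then show "pattern_count V T R {} graph_K1 = 1" by (simp add: pattern_count_def)
qed

definition zr_count :: "nat set \<Rightarrow> (nat \<Rightarrow> nat \<Rightarrow> bool) \<Rightarrow> (nat \<times> nat) set \<Rightarrow> zring \<Rightarrow> int"
  where "zr_count V T R x = int (pattern_count V T R {} (fst x)) - int (pattern_count V T R {} (snd x))"

lemma pattern_connected_nonempty: "pattern_connected V T R \<Longrightarrow> V \<noteq> {}"
  by (auto simp: pattern_connected_def)

context
  fixes V :: "nat set" and T :: "nat \<Rightarrow> nat \<Rightarrow> bool" and R :: "(nat \<times> nat) set"
  assumes fin: "finite V" and conn: "pattern_connected V T R"
begin

lemma zr_count_cong: "zr_eq x y \<Longrightarrow> zr_count V T R x = zr_count V T R y"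
proof -
  assume "zr_eq x y"
  then obtain K where "graph_iso (zjoin (zjoin (fst x) (snd y)) K) (zjoin (zjoin (fst y) (snd x)) K)"
    unfolding zr_eq_def by blast
  then have "pattern_count V T R {} (zjoin (zjoin (fst x) (snd y)) K) =
      pattern_count V T R {} (zjoin (zjoin (fst y) (snd x)) K)"
    using pattern_count_iso fin by blast
  then show ?thesis
    unfolding zr_count_def by (simp add: pattern_count_zjoin[OF fin conn])
qed

lemma zr_count_mul: "zr_count V T R (zr_mul x y) = zr_count V T R x * zr_count V T R y"
  unfolding zr_count_def zr_mul_def
  by (simp add: pattern_count_zjoin[OF fin conn] pattern_count_zprod[OF fin] algebra_simps)

lemma zr_count_one: "zr_count V T R zr_one = 1"
  using pattern_connected_nonempty[OF conn] by (simp add: zr_count_def zr_one_def pattern_count_graph_K1 pattern_count_graph_empty)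

lemma zr_count_K2: "zr_count V T R zr_K2 = 2"
  using pattern_connected_nonempty[OF conn]
  by (simp add: zr_count_def zr_K2_def pattern_count_graph_K1 pattern_count_graph_empty
      pattern_count_zjoin[OF fin conn])

lemma zr_count_eq_zero_if_square_eq_twice_square:
  assumes "zr_eq (zr_mul (zr_mul a a) zr_one) (zr_mul zr_K2 (zr_mul b b))"
  shows "zr_count V T R b = 0"
proof (rule int_square_eq_twice_square_imp_zero)
  from zr_count_cong[OF assms] show "(zr_count V T R a)\<^sup>2 = 2 * (zr_count V T R b)\<^sup>2"
    by (simp add: zr_count_mul zr_count_one zr_count_K2 power2_eq_square)
qed

end

lemma pattern_count_no_vertices: "pattern_count {} T R D X = 1"
  by (simp add: pattern_count_def pattern_maps_def)

lemma pattern_maps_restrict: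
  "f \<in> pattern_maps V T R D X \<Longrightarrow> C \<subseteq> V \<Longrightarrow> restrict f C \<in> pattern_maps C T R D X"
  by (auto simp: pattern_maps_iff subset_iff)

lemma pattern_maps_merge:
  assumes g: "g \<in> pattern_maps C T R D X" and h: "h \<in> pattern_maps (V - C) T R D X"
    and unlinked: "\<And>u w. u \<in> C \<Longrightarrow> w \<in> V - C \<Longrightarrow> \<not> T u w \<and> \<not> T w u \<and> (u, w) \<notin> R \<and> (w, u) \<notin> R"
    and D: "D \<subseteq> C \<times> C \<union> (V - C) \<times> (V - C)"
  shows "restrict (\<lambda>u. if u \<in> C then g u else h u) V \<in> pattern_maps V T R D X"
proof -
  define m where "m u = (if u \<in> C then g u else h u)" for u
  have "(T u v \<longrightarrow> \<not> snd X (m u) (m v)) \<and> ((u, v) \<in> R \<longrightarrow> m u = m v) \<and> ((u, v) \<in> D \<longrightarrow> m u \<noteq> m v)"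
    if uv: "u \<in> V" "v \<in> V" for u v
  proof -
    consider "u \<in> C" "v \<in> C" | "u \<in> V - C" "v \<in> V - C" | "u \<in> C" "v \<in> V - C" | "u \<in> V - C" "v \<in> C"
      using uv by blast
    then show ?thesis
    proof cases
      case 1 with g show ?thesis by (simp add: m_def pattern_maps_iff)
    next
      case 2 with h show ?thesis by (simp add: m_def pattern_maps_iff)
    qed (use unlinked D in blast)+
  qed
  moreover have "m u < fst X" if "u \<in> V" for u
    using g h that by (simp add: m_def pattern_maps_iff)
  ultimately show ?thesis
    unfolding pattern_maps_iff m_def[symmetric] by simp
qed

lemma pattern_count_split:
  assumes "finite V" and C: "C \<subseteq> V"
    and unlinked: "\<And>u w. u \<in> C \<Longrightarrow> w \<in> V - C \<Longrightarrow> \<not> T u w \<and> \<not> T w u \<and> (u, w) \<notin> R \<and> (w, u) \<notin> R"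
  shows "pattern_count V T R {} X = pattern_count C T R {} X * pattern_count (V - C) T R {} X"
proof -
  define merge where "merge gh = restrict (\<lambda>u. if u \<in> C then fst gh u else snd gh u) V"
    for gh :: "(nat \<Rightarrow> nat) \<times> (nat \<Rightarrow> nat)"
  define split where "split f = (restrict f C, restrict f (V - C))" for f :: "nat \<Rightarrow> nat"
  have "bij_betw merge (pattern_maps C T R {} X \<times> pattern_maps (V - C) T R {} X) (pattern_maps V T R {} X)"
  proof (rule bij_betw_byWitness[where f' = split])
    show "\<forall>gh \<in> pattern_maps C T R {} X \<times> pattern_maps (V - C) T R {} X. split (merge gh) = gh"
    proof clarify
      fix g h assume "g \<in> pattern_maps C T R {} X" "h \<in> pattern_maps (V - C) T R {} X"
      then have g: "g \<in> extensional C" and h: "h \<in> extensional (V - C)" by (simp_all add: pattern_maps_iff)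
      have "restrict (merge (g, h)) C = g"
        by (rule extensionalityI[OF _ g]) (use C in \<open>auto simp: merge_def\<close>)
      moreover have "restrict (merge (g, h)) (V - C) = h"
        by (rule extensionalityI[OF _ h]) (auto simp: merge_def)
      ultimately show "split (merge (g, h)) = (g, h)" by (simp add: split_def)
    qed
    show "\<forall>f \<in> pattern_maps V T R {} X. merge (split f) = f"
      by (auto simp: merge_def split_def pattern_maps_iff intro!: extensionalityI[of _ V])
    show "merge ` (pattern_maps C T R {} X \<times> pattern_maps (V - C) T R {} X) \<subseteq> pattern_maps V T R {} X"
    proof clarify
      fix g h assume "g \<in> pattern_maps C T R {} X" "h \<in> pattern_maps (V - C) T R {} X"
      then show "merge (g, h) \<in> pattern_maps V T R {} X"
        unfolding merge_def fst_conv snd_conv by (rule pattern_maps_merge) (use unlinked in auto)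
    qed
    show "split ` pattern_maps V T R {} X \<subseteq> pattern_maps C T R {} X \<times> pattern_maps (V - C) T R {} X"
      using C by (auto simp: split_def pattern_maps_restrict)
  qed
  then show ?thesis
    unfolding pattern_count_def by (simp add: bij_betw_same_card[symmetric] card_cartesian_product)
qed

lemma pattern_count_eq_if_connected_counts_eq:
  assumes connected_case: "\<And>V T R. finite V \<Longrightarrow> pattern_connected V T R \<Longrightarrow>
      pattern_count V T R {} X = pattern_count V T R {} Y"
    and "finite V"
  shows "pattern_count V T R {} X = pattern_count V T R {} Y"
  using \<open>finite V\<close>
proof (induction "card V" arbitrary: V rule: less_induct)
  case less
  show ?case
  proof (cases "V = {}")
    case True
    then show ?thesis by (simp add: pattern_count_no_vertices)
  next
    case False
    then obtain v where v: "v \<in> V" by blast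
    define C where "C = {u \<in> V. (v, u) \<in> (pattern_link V T R)\<^sup>*}"
    have "C \<subseteq> V" "v \<in> C" using v by (auto simp: C_def)
    have unlinked: "\<not> T u w \<and> \<not> T w u \<and> (u, w) \<notin> R \<and> (w, u) \<notin> R" if "u \<in> C" "w \<in> V - C" for u w
    proof -
      have "(u, w) \<notin> pattern_link V T R"
        using that by (auto simp: C_def intro: rtrancl_into_rtrancl)
      with that \<open>C \<subseteq> V\<close> show ?thesis by (auto simp: pattern_link_def)
    qed
    show ?thesis
    proof (cases "C = V")
      case True
      then have "pattern_connected V T R" using v by (auto simp: pattern_connected_def C_def)
      with less.prems connected_case show ?thesis by blast
    next
      case False
      with \<open>C \<subseteq> V\<close> \<open>v \<in> C\<close> less.prems have "card C < card V" "card (V - C) < card V"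
        by (auto intro!: psubset_card_mono)
      moreover have "finite C" "finite (V - C)" using less.prems \<open>C \<subseteq> V\<close> finite_subset by auto
      ultimately show ?thesis
        using less.hyps pattern_count_split[OF less.prems \<open>C \<subseteq> V\<close> unlinked] by metis
    qed
  qed
qed

lemma pattern_maps_insert_distinct:
  "a \<in> V \<Longrightarrow> b \<in> V \<Longrightarrow>
    pattern_maps V T R (insert (a, b) D) X = pattern_maps V T R D X - pattern_maps V T (insert (a, b) R) D X"
  by (auto simp: pattern_maps_iff)

lemma pattern_maps_insert_distinct_outside:
  "\<not> (a \<in> V \<and> b \<in> V) \<Longrightarrow> pattern_maps V T R (insert (a, b) D) X = pattern_maps V T R D X"
  by (auto simp: pattern_maps_def)

lemma pattern_count_eq_if_no_distinct_counts_eq: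
  assumes base: "\<And>R. pattern_count V T R {} X = pattern_count V T R {} Y"
    and "finite V" and "finite D"
  shows "pattern_count V T R D X = pattern_count V T R D Y"
  using \<open>finite D\<close>
proof (induction D arbitrary: R rule: finite_induct)
  case empty
  then show ?case using base .
next
  case (insert p D)
  obtain a b where p: "p = (a, b)" by (cases p)
  show ?case
  proof (cases "a \<in> V \<and> b \<in> V")
    case True
    have "pattern_maps V T (insert (a, b) R) D Z \<subseteq> pattern_maps V T R D Z" for Z
      by (auto simp: pattern_maps_def)
    then have "pattern_count V T R (insert p D) Z = pattern_count V T R D Z - pattern_count V T (insert (a, b) R) D Z" for Z
      using True \<open>finite V\<close>
      by (simp add: p pattern_count_def pattern_maps_insert_distinct card_Diff_subset finite_pattern_maps)
    then show ?thesis using insert.IH by simp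
  next
    case False
    then show ?thesis using insert.IH by (simp add: p pattern_count_def pattern_maps_insert_distinct_outside)
  qed
qed

lemma nonedge_embedding_if_pattern_counts_eq:
  assumes counts: "\<And>V T R D. finite V \<Longrightarrow> finite D \<Longrightarrow> pattern_count V T R D X = pattern_count V T R D Y"
  shows "\<exists>\<phi>. nonedge_embedding \<phi> X Y"
proof -
  define V where "V = {..<fst X}"
  define T where "T u v \<longleftrightarrow> \<not> snd X u v" for u v
  define D where "D = {(u, v). u \<in> V \<and> v \<in> V \<and> u \<noteq> v}"
  have "finite D" unfolding D_def by (rule finite_subset[of _ "V \<times> V"]) (auto simp: V_def)
  have "restrict id V \<in> pattern_maps V T {} D X" by (auto simp: pattern_maps_iff V_def T_def D_def)
  then have "pattern_count V T {} D X \<noteq> 0"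
    unfolding pattern_count_def using finite_pattern_maps[of V] by (auto simp: V_def)
  with counts[of V D] \<open>finite D\<close> have "pattern_maps V T {} D Y \<noteq> {}"
    by (auto simp: V_def pattern_count_def)
  then obtain \<phi> where \<phi>: "\<phi> \<in> pattern_maps V T {} D Y" by blast
  then have "inj_on \<phi> V" by (auto simp: inj_on_def pattern_maps_iff D_def)
  with \<phi> show ?thesis
    by (auto simp: nonedge_embedding_def pattern_maps_iff V_def T_def)
qed

lemma card_edges_pullback:
  assumes "bij_betw f {..<q} {..<q}"
  shows "card {(u, v). u < q \<and> v < q \<and> P (f u) (f v)} = card {(u, v). u < q \<and> v < q \<and> P u v}"
proof (rule bij_betw_same_card)
  have bij: "bij_betw (map_prod f f) ({..<q} \<times> {..<q}) ({..<q} \<times> {..<q})"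
    using bij_betw_map_prod[OF assms assms] .
  show "bij_betw (map_prod f f) {(u, v). u < q \<and> v < q \<and> P (f u) (f v)} {(u, v). u < q \<and> v < q \<and> P u v}"
  proof (rule bij_betw_subset[OF bij])
    show "map_prod f f ` {(u, v). u < q \<and> v < q \<and> P (f u) (f v)} = {(u, v). u < q \<and> v < q \<and> P u v}"
    proof
      show "map_prod f f ` {(u, v). u < q \<and> v < q \<and> P (f u) (f v)} \<subseteq> {(u, v). u < q \<and> v < q \<and> P u v}"
        using assms by (auto dest: bij_betwE)
      show "{(u, v). u < q \<and> v < q \<and> P u v} \<subseteq> map_prod f f ` {(u, v). u < q \<and> v < q \<and> P (f u) (f v)}"
      proof clarify
        fix a b assume "a < q" "b < q" "P a b"
        moreover obtain u v where "u < q" "v < q" "a = f u" "b = f v"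
          using assms \<open>a < q\<close> \<open>b < q\<close> unfolding bij_betw_def by (metis imageE lessThan_iff)
        ultimately show "(a, b) \<in> map_prod f f ` {(u, v). u < q \<and> v < q \<and> P (f u) (f v)}" by auto
      qed
    qed
  qed auto
qed

text \<open>Both maps are bijections, and each pulls the edge set of its target into that of its source,
  so the edge counts agree and the inclusion for f is an equality.\<close>

lemma graph_iso_if_nonedge_embeddings:
  assumes "nonedge_embedding f X Y" and "nonedge_embedding g Y X"
  shows "graph_iso X Y"
proof -
  have "fst X \<le> fst Y" "fst Y \<le> fst X"
    using card_inj_on_le[of f "{..<fst X}" "{..<fst Y}"] card_inj_on_le[of g "{..<fst Y}" "{..<fst X}"]
      assms unfolding nonedge_embedding_def by simp_all
  then obtain q where q: "fst X = q" "fst Y = q" by simp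
  have "bij_betw f {..<q} {..<q}" "bij_betw g {..<q} {..<q}"
    using assms endo_inj_surj[of "{..<q}"] by (simp_all add: nonedge_embedding_def bij_betw_def q)
  define edges_X where "edges_X = {(u, v). u < q \<and> v < q \<and> snd X u v}"
  define edges_Y where "edges_Y = {(u, v). u < q \<and> v < q \<and> snd Y u v}"
  define edges_f where "edges_f = {(u, v). u < q \<and> v < q \<and> snd Y (f u) (f v)}"
  have "edges_f \<subseteq> edges_X" and g_pullback: "{(u, v). u < q \<and> v < q \<and> snd X (g u) (g v)} \<subseteq> edges_Y"
    using assms by (auto simp: nonedge_embedding_def q edges_f_def edges_X_def edges_Y_def)
  have "finite edges_X" "finite edges_Y"
    by (rule finite_subset[of _ "{..<q} \<times> {..<q}"]; auto simp: edges_X_def edges_Y_def)+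
  have "card edges_X = card {(u, v). u < q \<and> v < q \<and> snd X (g u) (g v)}"
    using card_edges_pullback[OF \<open>bij_betw g _ _\<close>] by (simp add: edges_X_def)
  also have "\<dots> \<le> card edges_Y"
    using card_mono[OF \<open>finite edges_Y\<close> g_pullback] .
  also have "\<dots> = card edges_f"
    using card_edges_pullback[OF \<open>bij_betw f _ _\<close>] by (simp add: edges_f_def edges_Y_def)
  finally have "card edges_X \<le> card edges_f" .
  with card_mono[OF \<open>finite edges_X\<close> \<open>edges_f \<subseteq> edges_X\<close>] have "edges_f = edges_X"
    by (intro card_subset_eq[OF \<open>finite edges_X\<close> \<open>edges_f \<subseteq> edges_X\<close>]) linarith
  have "snd X u v \<longleftrightarrow> snd Y (f u) (f v)" if "u < q" "v < q" for u v
    using that \<open>edges_f = edges_X\<close> unfolding edges_f_def edges_X_def by blast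
  with \<open>bij_betw f _ _\<close> show ?thesis
    unfolding graph_iso_def q by (intro conjI exI[of _ f]) simp_all
qed

lemma graph_iso_if_pattern_counts_eq:
  assumes "\<And>V T R D. finite V \<Longrightarrow> finite D \<Longrightarrow> pattern_count V T R D X = pattern_count V T R D Y"
  shows "graph_iso X Y"
proof -
  obtain f g where "nonedge_embedding f X Y" "nonedge_embedding g Y X"
    using nonedge_embedding_if_pattern_counts_eq assms by metis
  then show ?thesis by (rule graph_iso_if_nonedge_embeddings)
qed

lemma graph_iso_if_connected_pattern_counts_eq:
  assumes "\<And>V T R. finite V \<Longrightarrow> pattern_connected V T R \<Longrightarrow>
      pattern_count V T R {} X = pattern_count V T R {} Y"
  shows "graph_iso X Y"
proof (rule graph_iso_if_pattern_counts_eq)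
  fix V :: "nat set" and T R and D :: "(nat \<times> nat) set"
  assume "finite V" "finite D"
  show "pattern_count V T R D X = pattern_count V T R D Y"
  proof (rule pattern_count_eq_if_no_distinct_counts_eq[OF _ \<open>finite V\<close> \<open>finite D\<close>])
    fix R show "pattern_count V T R {} X = pattern_count V T R {} Y"
      by (rule pattern_count_eq_if_connected_counts_eq[OF assms \<open>finite V\<close>])
  qed
qed

lemma zr_eq_zero_if_graph_iso:
  assumes "graph_iso (fst x) (snd x)"
  shows "zr_eq x zr_zero"
proof -
  obtain f where "fst (fst x) = fst (snd x)" and bij: "bij_betw f {..<fst (fst x)} {..<fst (snd x)}"
    and "\<forall>u<fst (fst x). \<forall>v<fst (fst x). snd (fst x) u v \<longleftrightarrow> snd (snd x) (f u) (f v)"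
    using assms unfolding graph_iso_def by blast
  moreover have "f u < fst (snd x)" if "u < fst (fst x)" for u
    using bij that by (auto dest: bij_betwE)
  moreover have "snd (zjoin graph_empty (snd x)) u v = snd (snd x) u v" if "u < fst (snd x)" "v < fst (snd x)" for u v
    using zjoin_edge_high[OF that, of graph_empty] by (simp add: graph_empty_def)
  ultimately have "graph_iso (zjoin (zjoin (fst x) graph_empty) graph_empty) (zjoin (zjoin graph_empty (snd x)) graph_empty)"
    unfolding graph_iso_def by (intro conjI exI[of _ f]) (auto simp: graph_empty_def zjoin_edge_low)
  moreover have "graph_wf graph_empty" by (simp add: graph_wf_def graph_empty_def)
  ultimately show ?thesis unfolding zr_eq_def zr_zero_def by (intro exI[of _ graph_empty]) simp
qed

theorem mainTheorem15:
  shows "\<not> (\<exists>x. zf_wf x \<and> zf_eq (zf_mul x x) zf_K2)"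
proof
  assume "\<exists>x. zf_wf x \<and> zf_eq (zf_mul x x) zf_K2"
  then obtain a b where wf: "zf_wf (a, b)" and square: "zf_eq (zf_mul (a, b) (a, b)) zf_K2" by auto
  from square have "zr_eq (zr_mul (zr_mul a a) zr_one) (zr_mul zr_K2 (zr_mul b b))"
    by (simp add: zf_eq_def zf_mul_def zf_K2_def)
  then have "pattern_count V T R {} (fst b) = pattern_count V T R {} (snd b)"
    if "finite V" "pattern_connected V T R" for V T R
    using zr_count_eq_zero_if_square_eq_twice_square[OF that] by (simp add: zr_count_def)
  then have "graph_iso (fst b) (snd b)" by (rule graph_iso_if_connected_pattern_counts_eq)
  then have "zr_eq b zr_zero" by (rule zr_eq_zero_if_graph_iso)
  with wf show False by (simp add: zf_wf_def)
qed

end
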